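(* For every $\epsilon>0$ there exists $d_0$ such that for every fixed integer $d>d_0$, if $G$ is sampled from the configuration model $G^*(n,d)$ (with $nd$ even), then $m(G,2)\ge\frac{n}{d^{2+\epsilon}}$ with probability $1-o(1)$ as $n\to\infty$.
   Context: The configuration model $G^*(n,d)$: take cells $W=[n]\times[d]$, choose a uniformly random perfect matching of $W$, and for each matched pair of cells $(i,a),(j,b)$ add an edge between vertices $i$ and $j$ (the result may be a multigraph with loops and parallel edges). In bootstrap percolation the neighborhood $N(v)$ of a vertex is the set of distinct vertices $u\neq v$ joined to $v$ by at least one edge. Bootstrap percolation with threshold $r\ge 2$: given seeds $A_0\subseteq V$, $A_i=A_{i-1}\cup\{v:|N(v)\cap A_{i-1}|\ge r\}$ for $i\ge 1$, $\langle A_0\rangle=\bigcup_iA_i$; $A_0$ is contagious if $\langle A_0\rangle=V$, and $m(G,r)$ is the minimum size of a contagious set. *)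

theory Defs
  imports "HOL-Probability.Probability"
begin

text \<open>Cells W = [n] x [d], with vertices [n] = {0..<n} and half-edge labels {0..<d}.\<close>
definition cells :: "nat \<Rightarrow> nat \<Rightarrow> (nat \<times> nat) set" where
  "cells n d = {0..<n} \<times> {0..<d}"

text \<open>A perfect matching of W, encoded as a fixed-point-free involution of W
  (identity outside W, so that matchings and such maps are in bijection).\<close>
definition perfect_matchings :: "nat \<Rightarrow> nat \<Rightarrow> ((nat \<times> nat) \<Rightarrow> (nat \<times> nat)) set" where
  "perfect_matchings n d =
     {\<sigma>. (\<forall>w\<in>cells n d. \<sigma> w \<in> cells n d \<and> \<sigma> w \<noteq> w \<and> \<sigma> (\<sigma> w) = w)
        \<and> (\<forall>w. w \<notin> cells n d \<longrightarrow> \<sigma> w = w)}"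

definition cm_nbhd :: "nat \<Rightarrow> ((nat \<times> nat) \<Rightarrow> (nat \<times> nat)) \<Rightarrow> nat \<Rightarrow> nat set" where
  "cm_nbhd d \<sigma> v = {u. u \<noteq> v \<and> (\<exists>a<d. \<exists>b<d. \<sigma> (v, a) = (u, b))}"

fun boot_step :: "nat set \<Rightarrow> (nat \<Rightarrow> nat set) \<Rightarrow> nat \<Rightarrow> nat set \<Rightarrow> nat \<Rightarrow> nat set" where
  "boot_step V N r A0 0 = A0"
| "boot_step V N r A0 (Suc i) =
     boot_step V N r A0 i \<union> {v\<in>V. card (N v \<inter> boot_step V N r A0 i) \<ge> r}"

definition boot_closure :: "nat set \<Rightarrow> (nat \<Rightarrow> nat set) \<Rightarrow> nat \<Rightarrow> nat set \<Rightarrow> nat set" where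
  "boot_closure V N r A0 = (\<Union>i. boot_step V N r A0 i)"

definition contagious :: "nat set \<Rightarrow> (nat \<Rightarrow> nat set) \<Rightarrow> nat \<Rightarrow> nat set \<Rightarrow> bool" where
  "contagious V N r A0 \<longleftrightarrow> A0 \<subseteq> V \<and> boot_closure V N r A0 = V"

definition min_contagious :: "nat set \<Rightarrow> (nat \<Rightarrow> nat set) \<Rightarrow> nat \<Rightarrow> nat" where
  "min_contagious V N r = (LEAST k. \<exists>A. contagious V N r A \<and> card A = k)"

end

theory Submission
  imports Defs
begin

text \<open>
  Suppose a set \<open>A\<close> of at most \<open>k\<close> vertices is contagious. Listing the vertices in order of
  activation, let \<open>S\<close> consist of the first \<open>s = L k\<close> of them. Every vertex of \<open>S - A\<close> has two
  neighbours that were activated strictly earlier and hence lie in \<open>S\<close>; orienting these edges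
  towards the earlier endpoint shows that \<open>S\<close> spans at least \<open>m = 2 (s - k)\<close> edges.
  A first-moment count over the configuration model bounds the probability that some
  \<open>s\<close>-set spans \<open>m\<close> edges by \<open>(e n / s)^s (2 e d s^2 / (m n))^m\<close>, which is at most
  \<open>(e^L (2 e d)^(2 L - 2) (s / n)^(L - 2))^k\<close>. For \<open>k \<approx> n / d^(2 + \<epsilon>)\<close> and \<open>L \<ge> 2 + 3 / \<epsilon>\<close>
  this is at most \<open>(C_L / d)^k \<le> 2^(-k)\<close> once \<open>d\<close> is large.
\<close>

section \<open>Perfect matchings as fixed-point-free involutions\<close>

definition fpf_involutions :: "'a set \<Rightarrow> ('a \<Rightarrow> 'a) set" where
  "fpf_involutions X =
     {\<sigma>. (\<forall>w\<in>X. \<sigma> w \<in> X \<and> \<sigma> w \<noteq> w \<and> \<sigma> (\<sigma> w) = w) \<and> (\<forall>w. w \<notin> X \<longrightarrow> \<sigma> w = w)}"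

fun pairings_count :: "nat \<Rightarrow> nat" where
  "pairings_count 0 = 1"
| "pairings_count (Suc 0) = 0"
| "pairings_count (Suc (Suc k)) = Suc k * pairings_count k"

lemma perfect_matchings_eq_fpf_involutions:
  "perfect_matchings n d = fpf_involutions (cells n d)"
  unfolding perfect_matchings_def fpf_involutions_def ..

lemma finite_fpf_involutions:
  assumes "finite X"
  shows "finite (fpf_involutions X)"
proof -
  let ?F = "{f. \<forall>x. (x \<in> X \<longrightarrow> f x \<in> X) \<and> (x \<notin> X \<longrightarrow> f x = x)}"
  have "fpf_involutions X \<subseteq> ?F"
    unfolding fpf_involutions_def by auto
  moreover have "inj_on (\<lambda>f. restrict f X) ?F"
  proof (rule inj_onI, rule ext)
    fix f g x
    assume f: "f \<in> ?F" and g: "g \<in> ?F" and fg: "restrict f X = restrict g X"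
    show "f x = g x"
    proof (cases "x \<in> X")
      case True
      then show ?thesis using fun_cong[OF fg, of x] by simp
    next
      case False
      then show ?thesis using f g by simp
    qed
  qed
  moreover have "(\<lambda>f. restrict f X) ` ?F \<subseteq> X \<rightarrow>\<^sub>E X"
  proof (rule image_subsetI)
    fix f assume "f \<in> ?F"
    then show "restrict f X \<in> X \<rightarrow>\<^sub>E X"
      by (simp add: restrict_PiE_iff)
  qed
  ultimately show ?thesis
    by (meson assms finite_PiE finite_imageD finite_subset)
qed

lemma card_fpf_involutions_pair:
  assumes X: "a \<in> X" "b \<in> X" "a \<noteq> b" and disj: "{a, b} \<inter> (T \<union> f ` T) = {}"
  shows "card {\<sigma>\<in>fpf_involutions X. \<sigma> a = b \<and> (\<forall>t\<in>T. \<sigma> t = f t)}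
       = card {\<tau>\<in>fpf_involutions (X - {a, b}). \<forall>t\<in>T. \<tau> t = f t}"
proof (rule bij_betw_same_card[of "\<lambda>\<sigma>. \<sigma>(a := a, b := b)"],
       rule bij_betw_byWitness[where f' = "\<lambda>\<tau>. \<tau>(a := b, b := a)"])
  show "(\<lambda>\<sigma>. \<sigma>(a := a, b := b)) ` {\<sigma>\<in>fpf_involutions X. \<sigma> a = b \<and> (\<forall>t\<in>T. \<sigma> t = f t)}
      \<subseteq> {\<tau>\<in>fpf_involutions (X - {a, b}). \<forall>t\<in>T. \<tau> t = f t}"
  proof (rule image_subsetI)
    fix \<sigma> assume \<sigma>: "\<sigma> \<in> {\<sigma>\<in>fpf_involutions X. \<sigma> a = b \<and> (\<forall>t\<in>T. \<sigma> t = f t)}"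
    then have inv: "\<And>w. w \<in> X \<Longrightarrow> \<sigma> w \<in> X \<and> \<sigma> w \<noteq> w \<and> \<sigma> (\<sigma> w) = w"
      and out: "\<And>w. w \<notin> X \<Longrightarrow> \<sigma> w = w" and ab: "\<sigma> a = b" and Tf: "\<forall>t\<in>T. \<sigma> t = f t"
      unfolding fpf_involutions_def by auto
    have ba: "\<sigma> b = a"
      using inv[OF X(1)] ab by simp
    have "\<sigma> w \<in> X - {a, b}" if "w \<in> X - {a, b}" for w
      using inv[of w] that ab ba by auto
    then show "\<sigma>(a := a, b := b) \<in> {\<tau>\<in>fpf_involutions (X - {a, b}). \<forall>t\<in>T. \<tau> t = f t}"
      using inv out Tf disj unfolding fpf_involutions_def by auto
  qed
  show "(\<lambda>\<tau>. \<tau>(a := b, b := a)) ` {\<tau>\<in>fpf_involutions (X - {a, b}). \<forall>t\<in>T. \<tau> t = f t}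
      \<subseteq> {\<sigma>\<in>fpf_involutions X. \<sigma> a = b \<and> (\<forall>t\<in>T. \<sigma> t = f t)}"
  proof (rule image_subsetI)
    fix \<tau> assume "\<tau> \<in> {\<tau>\<in>fpf_involutions (X - {a, b}). \<forall>t\<in>T. \<tau> t = f t}"
    then have inv: "\<And>w. w \<in> X - {a, b} \<Longrightarrow> \<tau> w \<in> X - {a, b} \<and> \<tau> w \<noteq> w \<and> \<tau> (\<tau> w) = w"
      and out: "\<And>w. w \<notin> X - {a, b} \<Longrightarrow> \<tau> w = w" and Tf: "\<forall>t\<in>T. \<tau> t = f t"
      unfolding fpf_involutions_def by auto
    show "\<tau>(a := b, b := a) \<in> {\<sigma>\<in>fpf_involutions X. \<sigma> a = b \<and> (\<forall>t\<in>T. \<sigma> t = f t)}"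
      using inv out Tf disj X unfolding fpf_involutions_def by auto
  qed
  show "\<forall>\<sigma>\<in>{\<sigma>\<in>fpf_involutions X. \<sigma> a = b \<and> (\<forall>t\<in>T. \<sigma> t = f t)}.
          (\<sigma>(a := a, b := b))(a := b, b := a) = \<sigma>"
    using X unfolding fpf_involutions_def by (auto simp: fun_eq_iff)
  show "\<forall>\<tau>\<in>{\<tau>\<in>fpf_involutions (X - {a, b}). \<forall>t\<in>T. \<tau> t = f t}.
          (\<tau>(a := b, b := a))(a := a, b := b) = \<tau>"
    unfolding fpf_involutions_def by (auto simp: fun_eq_iff)
qed

lemma card_fpf_involutions_split:
  assumes "finite X" "a \<in> X"
  shows "card (fpf_involutions X) = (\<Sum>b\<in>X - {a}. card (fpf_involutions (X - {a, b})))"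
proof -
  let ?P = "\<lambda>b. {\<sigma>\<in>fpf_involutions X. \<sigma> a = b}"
  have "fpf_involutions X = (\<Union>b\<in>X - {a}. ?P b)"
    using assms(2) by (auto simp: fpf_involutions_def)
  moreover have "card (\<Union>b\<in>X - {a}. ?P b) = (\<Sum>b\<in>X - {a}. card (?P b))"
  proof (rule card_UN_disjoint)
    show "\<forall>b\<in>X - {a}. finite (?P b)"
      using finite_fpf_involutions[OF assms(1)] by auto
  qed (use assms in auto)
  moreover have "card (?P b) = card (fpf_involutions (X - {a, b}))" if "b \<in> X - {a}" for b
    using card_fpf_involutions_pair[of a X b "{}"] assms that by auto
  ultimately show ?thesis
    by simp
qed

lemma card_fpf_involutions:
  "finite X \<Longrightarrow> card (fpf_involutions X) = pairings_count (card X)"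
proof (induction "card X" arbitrary: X rule: less_induct)
  case less
  consider "card X = 0" | "card X = 1" | j where "card X = Suc (Suc j)"
    by (metis One_nat_def not0_implies_Suc)
  then show ?case
  proof cases
    case 1
    then have "fpf_involutions X = {id}"
      using less.prems by (auto simp: fpf_involutions_def fun_eq_iff)
    then show ?thesis
      using 1 by simp
  next
    case 2
    then obtain a where "X = {a}"
      by (auto simp: card_Suc_eq)
    then have "fpf_involutions X = {}"
      by (auto simp: fpf_involutions_def)
    then show ?thesis
      using 2 by simp
  next
    case (3 j)
    then obtain a where a: "a \<in> X"
      by fastforce
    have "card (fpf_involutions X) = (\<Sum>b\<in>X - {a}. card (fpf_involutions (X - {a, b})))"
      by (rule card_fpf_involutions_split[OF less.prems a])
    also have "\<dots> = (\<Sum>b\<in>X - {a}. pairings_count j)"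
    proof (rule sum.cong)
      fix b assume b: "b \<in> X - {a}"
      then have "card (X - {a, b}) = j"
        using a less.prems 3 by (auto simp: card_Diff_subset)
      then show "card (fpf_involutions (X - {a, b})) = pairings_count j"
        using less.hyps[of "X - {a, b}"] less.prems 3 by simp
    qed simp
    also have "\<dots> = pairings_count (card X)"
      using a less.prems 3 by simp
    finally show ?thesis .
  qed
qed

lemma card_fpf_involutions_extending:
  assumes "finite T" "finite X" "T \<subseteq> X" "f ` T \<subseteq> X" "inj_on f T" "f ` T \<inter> T = {}"
  shows "card {\<sigma>\<in>fpf_involutions X. \<forall>t\<in>T. \<sigma> t = f t}
       = card (fpf_involutions (X - (T \<union> f ` T)))"
  using assms
proof (induction T arbitrary: X rule: finite_induct)
  case empty
  then show ?case by simp
next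
  case (insert a T)
  have fa: "a \<noteq> f a" "f a \<notin> T" "a \<notin> f ` T" "f a \<notin> f ` T"
    using insert.hyps(2) insert.prems(4,5) by auto
  have "{\<sigma>\<in>fpf_involutions X. \<forall>t\<in>insert a T. \<sigma> t = f t}
      = {\<sigma>\<in>fpf_involutions X. \<sigma> a = f a \<and> (\<forall>t\<in>T. \<sigma> t = f t)}"
    by auto
  also have "card \<dots> = card {\<tau>\<in>fpf_involutions (X - {a, f a}). \<forall>t\<in>T. \<tau> t = f t}"
    by (rule card_fpf_involutions_pair) (use insert in auto)
  also have "\<dots> = card (fpf_involutions (X - {a, f a} - (T \<union> f ` T)))"
  proof (rule insert.IH)
    show "T \<subseteq> X - {a, f a}"
      using insert.prems(2) insert.hyps(2) fa(2) by auto
    show "f ` T \<subseteq> X - {a, f a}"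
      using insert.prems(3) fa(3,4) by blast
  qed (use insert.prems in auto)
  also have "X - {a, f a} - (T \<union> f ` T) = X - (insert a T \<union> f ` insert a T)"
    by auto
  finally show ?case .
qed

lemma pairings_count_pos: "even k \<Longrightarrow> 0 < pairings_count k"
  by (induction k rule: pairings_count.induct) auto

lemma pairings_count_ge:
  "2 * m \<le> k \<Longrightarrow> (k - 2 * m) ^ m * pairings_count (k - 2 * m) \<le> pairings_count k"
proof (induction m arbitrary: k)
  case 0
  then show ?case by simp
next
  case (Suc m)
  then obtain j where j: "k = Suc (Suc j)"
    by (cases k; cases "k - 1") auto
  have "(k - 2 * Suc m) ^ Suc m * pairings_count (k - 2 * Suc m)
      = (j - 2 * m) * ((j - 2 * m) ^ m * pairings_count (j - 2 * m))"
    using j by simp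
  also have "\<dots> \<le> Suc j * pairings_count j"
    by (rule mult_mono) (use Suc j in auto)
  finally show ?case
    using j by simp
qed

section \<open>Bootstrap percolation\<close>

lemma boot_step_mono: "i \<le> j \<Longrightarrow> boot_step V N r A i \<subseteq> boot_step V N r A j"
  by (rule lift_Suc_mono_le[of "boot_step V N r A"]) auto

lemma boot_step_subset: "A \<subseteq> V \<Longrightarrow> boot_step V N r A i \<subseteq> V"
  by (induction i) auto

lemma contagious_self: "contagious V N r V"
  using boot_step_subset[of V V N r]
  unfolding contagious_def boot_closure_def by (auto intro: UN_I[of 0])

lemma min_contagious_witness: "\<exists>A. contagious V N r A \<and> card A = min_contagious V N r"
  unfolding min_contagious_def by (rule LeastI_ex) (use contagious_self in blast)

lemma contagious_boot_step_eq:
  assumes "finite V" "contagious V N r A"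
  obtains I where "boot_step V N r A I = V"
proof -
  have AV: "A \<subseteq> V" and "boot_closure V N r A = V"
    using assms(2) unfolding contagious_def by auto
  then have "\<forall>v\<in>V. \<exists>i. v \<in> boot_step V N r A i"
    unfolding boot_closure_def by auto
  then obtain h where h: "\<And>v. v \<in> V \<Longrightarrow> v \<in> boot_step V N r A (h v)"
    by metis
  have "V \<subseteq> boot_step V N r A (Max (h ` V))"
  proof
    fix v assume "v \<in> V"
    then have "h v \<le> Max (h ` V)"
      using assms(1) by simp
    then show "v \<in> boot_step V N r A (Max (h ` V))"
      using h[OF \<open>v \<in> V\<close>] boot_step_mono by blast
  qed
  then show ?thesis
    using that boot_step_subset[OF AV] by blast
qed

lemma obtain_subset_between:
  assumes "finite Y" "X \<subseteq> Y" "card X \<le> s" "s \<le> card Y"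
  obtains S where "X \<subseteq> S" "S \<subseteq> Y" "card S = s"
proof -
  have "finite X"
    using assms finite_subset by blast
  then have "s - card X \<le> card (Y - X)"
    using assms by (simp add: card_Diff_subset)
  then obtain R where R: "R \<subseteq> Y - X" "card R = s - card X"
    by (meson obtain_subset_with_card_n)
  have "finite R"
    using R(1) assms(1) finite_subset by blast
  moreover have "X \<inter> R = {}"
    using R(1) by blast
  ultimately have "card (X \<union> R) = s"
    using R(2) \<open>finite X\<close> assms(3) by (simp add: card_Un_disjoint)
  then show ?thesis
    using that[of "X \<union> R"] R assms(2) by blast
qed

lemma contagious_obtain_between_steps:
  assumes V: "finite V" and con: "contagious V N r A" and s: "card A \<le> s" "s \<le> card V"
  obtains i S where "boot_step V N r A i \<subseteq> S" "S \<subseteq> boot_step V N r A (Suc i)" "card S = s"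
proof -
  let ?B = "boot_step V N r A"
  have "A \<subseteq> V"
    using con unfolding contagious_def by simp
  then have fin: "finite (?B i)" for i
    by (rule finite_subset[OF boot_step_subset V])
  obtain I where "?B I = V"
    using contagious_boot_step_eq[OF V con] .
  then have ex: "\<exists>j. s \<le> card (?B j)"
    using s by (intro exI[of _ I]) simp
  define j where "j = (LEAST j. s \<le> card (?B j))"
  have j: "s \<le> card (?B j)"
    unfolding j_def by (rule LeastI_ex[OF ex])
  define i where "i = j - 1"
  have "card (?B i) \<le> s"
  proof (cases j)
    case 0
    then show ?thesis using s i_def by simp
  next
    case (Suc j')
    then show ?thesis
      using not_less_Least[of i "\<lambda>j. s \<le> card (?B j)"] i_def j_def by simp
  qed
  moreover have "j \<le> Suc i"
    using i_def by simp
  then have "s \<le> card (?B (Suc i))"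
    using j card_mono[OF fin boot_step_mono[of j "Suc i"]] by simp
  ultimately obtain S where "?B i \<subseteq> S" "S \<subseteq> ?B (Suc i)" "card S = s"
    using obtain_subset_between[OF fin boot_step_mono[of i "Suc i"]] by auto
  then show ?thesis
    using that by blast
qed

definition activation_time :: "nat set \<Rightarrow> (nat \<Rightarrow> nat set) \<Rightarrow> nat \<Rightarrow> nat set \<Rightarrow> nat \<Rightarrow> nat" where
  "activation_time V N r A v = (LEAST i. v \<in> boot_step V N r A i)"

lemma activation_time_le: "v \<in> boot_step V N r A i \<Longrightarrow> activation_time V N r A v \<le> i"
  unfolding activation_time_def by (rule Least_le)

lemma activation_time_earlier_neighbours:
  assumes "v \<in> boot_step V N r A i" "v \<notin> A"
  obtains q where "activation_time V N r A v = Suc q" "r \<le> card (N v \<inter> boot_step V N r A q)"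
proof -
  let ?t = "activation_time V N r A v"
  have v: "v \<in> boot_step V N r A ?t"
    unfolding activation_time_def by (rule LeastI) (rule assms(1))
  have "?t \<noteq> 0"
  proof
    assume "?t = 0"
    then show False
      using v assms(2) by simp
  qed
  then obtain q where q: "?t = Suc q"
    using not0_implies_Suc by blast
  moreover have "v \<notin> boot_step V N r A q"
    using not_less_Least[of q "\<lambda>i. v \<in> boot_step V N r A i"] q
    unfolding activation_time_def by simp
  ultimately show ?thesis
    using that v by auto
qed

section \<open>Small contagious sets span dense subgraphs\<close>

lemma cm_nbhd_earlier_half_edges:
  assumes "v \<in> boot_step V (cm_nbhd d \<sigma>) 2 A i" "v \<notin> A"
  obtains q a1 a2 where "activation_time V (cm_nbhd d \<sigma>) 2 A v = Suc q" "a1 \<noteq> a2"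
    "\<And>a. a \<in> {a1, a2} \<Longrightarrow>
       a < d \<and> snd (\<sigma> (v, a)) < d \<and> fst (\<sigma> (v, a)) \<in> boot_step V (cm_nbhd d \<sigma>) 2 A q"
proof -
  let ?N = "cm_nbhd d \<sigma>"
  obtain q where q: "activation_time V ?N 2 A v = Suc q" "2 \<le> card (?N v \<inter> boot_step V ?N 2 A q)"
    using activation_time_earlier_neighbours[OF assms] .
  then obtain U where "U \<subseteq> ?N v \<inter> boot_step V ?N 2 A q" "card U = 2"
    by (meson obtain_subset_with_card_n)
  then obtain u1 u2 where u: "u1 \<in> ?N v" "u2 \<in> ?N v" "u1 \<in> boot_step V ?N 2 A q"
      "u2 \<in> boot_step V ?N 2 A q" "u1 \<noteq> u2"
    by (auto simp: card_2_iff)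
  obtain a1 b1 where "a1 < d" "b1 < d" "\<sigma> (v, a1) = (u1, b1)"
    using u(1) unfolding cm_nbhd_def by auto
  moreover obtain a2 b2 where "a2 < d" "b2 < d" "\<sigma> (v, a2) = (u2, b2)"
    using u(2) unfolding cm_nbhd_def by auto
  ultimately show ?thesis
    using u by (intro that[OF q(1), of a1 a2]) auto
qed

definition inward_half_edges ::
    "nat \<Rightarrow> nat \<Rightarrow> (nat \<times> nat \<Rightarrow> nat \<times> nat) \<Rightarrow> nat set \<Rightarrow> nat set \<Rightarrow> (nat \<times> nat) set" where
  "inward_half_edges n d \<sigma> A S =
     {h \<in> S \<times> {0..<d}. fst h \<notin> A \<and> \<sigma> h \<in> S \<times> {0..<d}
        \<and> activation_time {0..<n} (cm_nbhd d \<sigma>) 2 A (fst (\<sigma> h))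
          < activation_time {0..<n} (cm_nbhd d \<sigma>) 2 A (fst h)}"

lemma inward_half_edges_disjoint:
  assumes "\<sigma> \<in> perfect_matchings n d" "S \<subseteq> {0..<n}"
  shows "\<sigma> ` inward_half_edges n d \<sigma> A S \<inter> inward_half_edges n d \<sigma> A S = {}"
proof (rule ccontr)
  let ?T = "inward_half_edges n d \<sigma> A S"
  assume "\<sigma> ` ?T \<inter> ?T \<noteq> {}"
  then obtain h where h: "h \<in> ?T" "\<sigma> h \<in> ?T"
    by auto
  have "\<sigma> (\<sigma> h) = h"
    using assms h unfolding perfect_matchings_def cells_def inward_half_edges_def by auto
  then show False
    using h unfolding inward_half_edges_def by auto
qed

lemma two_le_card_inward_half_edges_at:
  assumes con: "contagious {0..<n} (cm_nbhd d \<sigma>) 2 A"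
    and S: "boot_step {0..<n} (cm_nbhd d \<sigma>) 2 A i \<subseteq> S"
      "S \<subseteq> boot_step {0..<n} (cm_nbhd d \<sigma>) 2 A (Suc i)"
    and v: "v \<in> S - A"
  shows "2 \<le> card {h \<in> inward_half_edges n d \<sigma> A S. fst h = v}"
proof -
  let ?B = "boot_step {0..<n} (cm_nbhd d \<sigma>) 2 A"
  let ?t = "activation_time {0..<n} (cm_nbhd d \<sigma>) 2 A"
  obtain q a1 a2 where q: "?t v = Suc q" and "a1 \<noteq> a2" and
    a: "\<And>a. a \<in> {a1, a2} \<Longrightarrow> a < d \<and> snd (\<sigma> (v, a)) < d \<and> fst (\<sigma> (v, a)) \<in> ?B q"
    using cm_nbhd_earlier_half_edges[of v "{0..<n}" d \<sigma> A "Suc i"] v S(2) by blast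
  have "q \<le> i"
    using activation_time_le[of v] v S(2) q by fastforce
  then have "?B q \<subseteq> S"
    using boot_step_mono[of q i] S(1) by blast
  moreover have "?t u < ?t v" if "u \<in> ?B q" for u
    using activation_time_le[OF that] q by simp
  ultimately have "{(v, a1), (v, a2)} \<subseteq> {h \<in> inward_half_edges n d \<sigma> A S. fst h = v}"
    using a v unfolding inward_half_edges_def by (auto simp: mem_Times_iff)
  moreover have "finite (inward_half_edges n d \<sigma> A S)"
  proof (rule finite_subset)
    show "inward_half_edges n d \<sigma> A S \<subseteq> {0..<n} \<times> {0..<d}"
      using S(2) boot_step_subset con unfolding contagious_def inward_half_edges_def by blast
  qed simp
  ultimately have "card {(v, a1), (v, a2)} \<le> card {h \<in> inward_half_edges n d \<sigma> A S. fst h = v}"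
    by (intro card_mono) auto
  then show ?thesis
    using \<open>a1 \<noteq> a2\<close> by simp
qed

lemma card_inward_half_edges_ge:
  assumes con: "contagious {0..<n} (cm_nbhd d \<sigma>) 2 A"
    and S: "boot_step {0..<n} (cm_nbhd d \<sigma>) 2 A i \<subseteq> S"
      "S \<subseteq> boot_step {0..<n} (cm_nbhd d \<sigma>) 2 A (Suc i)"
  shows "2 * card (S - A) \<le> card (inward_half_edges n d \<sigma> A S)"
proof -
  let ?T = "inward_half_edges n d \<sigma> A S"
  have "S \<subseteq> {0..<n}"
    using S(2) boot_step_subset con unfolding contagious_def by blast
  then have finS: "finite S" and finT: "finite ?T"
    by (auto intro: finite_subset[of _ "{0..<n} \<times> {0..<d}"] finite_subset simp: inward_half_edges_def)
  have "2 * card (S - A) = (\<Sum>v\<in>S - A. 2)"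
    by simp
  also have "\<dots> \<le> (\<Sum>v\<in>S - A. card {h \<in> ?T. fst h = v})"
    by (rule sum_mono, rule two_le_card_inward_half_edges_at[OF con S])
  also have "\<dots> = card (\<Union>v\<in>S - A. {h \<in> ?T. fst h = v})"
    by (rule card_UN_disjoint[symmetric]) (use finT finS in auto)
  also have "\<dots> \<le> card ?T"
    by (rule card_mono[OF finT]) auto
  finally show ?thesis .
qed

text \<open>
  \<open>S\<close> spans at least \<open>m\<close> edges of the multigraph: \<open>T\<close> contains one cell of each of \<open>m\<close>
  distinct matched pairs inside \<open>S\<close>.
\<close>
definition dense_event :: "nat \<Rightarrow> nat \<Rightarrow> nat \<Rightarrow> nat \<Rightarrow> (nat \<times> nat \<Rightarrow> nat \<times> nat) set" where
  "dense_event n d s m =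
     {\<sigma>. \<exists>S T. S \<subseteq> {0..<n} \<and> card S = s \<and> T \<subseteq> S \<times> {0..<d} \<and> card T = m
            \<and> \<sigma> ` T \<subseteq> S \<times> {0..<d} \<and> \<sigma> ` T \<inter> T = {}}"

lemma small_contagious_imp_dense_event:
  assumes pm: "\<sigma> \<in> perfect_matchings n d"
    and con: "contagious {0..<n} (cm_nbhd d \<sigma>) 2 A" and "card A \<le> k" "k \<le> s" "s \<le> n"
  shows "\<sigma> \<in> dense_event n d s (2 * (s - k))"
proof -
  have "card A \<le> s" "s \<le> card {0..<n}"
    using assms by auto
  then obtain i S where S: "boot_step {0..<n} (cm_nbhd d \<sigma>) 2 A i \<subseteq> S"
      "S \<subseteq> boot_step {0..<n} (cm_nbhd d \<sigma>) 2 A (Suc i)" "card S = s"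
    using contagious_obtain_between_steps[OF finite_atLeastLessThan con] by blast
  let ?T = "inward_half_edges n d \<sigma> A S"
  have AV: "A \<subseteq> {0..<n}"
    using con unfolding contagious_def by simp
  then have SV: "S \<subseteq> {0..<n}"
    using S(2) boot_step_subset by blast
  have "card S - card A \<le> card (S - A)"
    using AV finite_subset by (intro diff_card_le_card_Diff) auto
  then have "2 * (s - k) \<le> card ?T"
    using S(3) card_inward_half_edges_ge[OF con S(1,2)] assms by linarith
  then obtain T where T: "T \<subseteq> ?T" "card T = 2 * (s - k)"
    by (meson obtain_subset_with_card_n)
  have "?T \<subseteq> S \<times> {0..<d}" "\<sigma> ` ?T \<subseteq> S \<times> {0..<d}"
    unfolding inward_half_edges_def by auto
  then have "T \<subseteq> S \<times> {0..<d}" "\<sigma> ` T \<subseteq> S \<times> {0..<d}" "\<sigma> ` T \<inter> T = {}"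
    using T(1) image_mono[OF T(1), of \<sigma>] inward_half_edges_disjoint[OF pm SV, of A] by blast+
  then show ?thesis
    unfolding dense_event_def using SV S(3) T(2) by blast
qed

lemma min_contagious_le_imp_dense_event:
  assumes "\<sigma> \<in> perfect_matchings n d" "min_contagious {0..<n} (cm_nbhd d \<sigma>) 2 \<le> k"
    "1 \<le> L" "L * k \<le> n"
  shows "\<sigma> \<in> dense_event n d (L * k) ((2 * L - 2) * k)"
proof -
  obtain A where A: "contagious {0..<n} (cm_nbhd d \<sigma>) 2 A"
      "card A = min_contagious {0..<n} (cm_nbhd d \<sigma>) 2"
    using min_contagious_witness by blast
  have "(2 * L - 2) * k = 2 * (L * k - k)"
    by (simp add: diff_mult_distrib)
  then show ?thesis
    using small_contagious_imp_dense_event[OF assms(1) A(1), of k "L * k"] A(2) assms by simp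
qed

section \<open>Counting matchings with a dense subgraph\<close>

lemma card_cells: "card (cells n d) = n * d"
  by (simp add: cells_def card_cartesian_product)

lemma finite_cells: "finite (cells n d)"
  by (simp add: cells_def)

lemma finite_perfect_matchings: "finite (perfect_matchings n d)"
  unfolding perfect_matchings_eq_fpf_involutions by (rule finite_fpf_involutions[OF finite_cells])

lemma card_perfect_matchings: "card (perfect_matchings n d) = pairings_count (n * d)"
  unfolding perfect_matchings_eq_fpf_involutions
  using card_fpf_involutions[OF finite_cells] by (simp add: card_cells)

lemma card_matchings_extending:
  assumes "T \<subseteq> cells n d" "f ` T \<subseteq> cells n d" "inj_on f T" "f ` T \<inter> T = {}"
  shows "card {\<sigma>\<in>perfect_matchings n d. \<forall>t\<in>T. \<sigma> t = f t} = pairings_count (n * d - 2 * card T)"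
proof -
  have "finite T"
    using assms(1) finite_cells finite_subset by blast
  then have "card (T \<union> f ` T) = 2 * card T"
    using assms by (simp add: card_Un_disjoint card_image Int_commute)
  moreover have "T \<union> f ` T \<subseteq> cells n d"
    using assms by auto
  ultimately have "card (cells n d - (T \<union> f ` T)) = n * d - 2 * card T"
    using card_Diff_subset[of "T \<union> f ` T" "cells n d"] \<open>finite T\<close> by (simp add: card_cells)
  then show ?thesis
    unfolding perfect_matchings_eq_fpf_involutions
    using card_fpf_involutions_extending[OF \<open>finite T\<close> finite_cells assms]
      card_fpf_involutions[of "cells n d - (T \<union> f ` T)"] finite_cells by simp
qed

lemma dense_event_subset_extensions:
  "perfect_matchings n d \<inter> dense_event n d s m \<subseteq>
    (\<Union>S\<in>{S. S \<subseteq> {0..<n} \<and> card S = s}. \<Union>T\<in>{T. T \<subseteq> S \<times> {0..<d} \<and> card T = m}.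
       \<Union>f\<in>{f \<in> T \<rightarrow>\<^sub>E S \<times> {0..<d}. inj_on f T \<and> f ` T \<inter> T = {}}.
         {\<sigma>\<in>perfect_matchings n d. \<forall>t\<in>T. \<sigma> t = f t})"
proof
  fix \<sigma> assume "\<sigma> \<in> perfect_matchings n d \<inter> dense_event n d s m"
  then have pm: "\<sigma> \<in> perfect_matchings n d" and "\<sigma> \<in> dense_event n d s m"
    by auto
  then obtain S T where ST: "S \<subseteq> {0..<n}" "card S = s" "T \<subseteq> S \<times> {0..<d}" "card T = m"
      "\<sigma> ` T \<subseteq> S \<times> {0..<d}" "\<sigma> ` T \<inter> T = {}"
    unfolding dense_event_def by blast
  have "inj_on \<sigma> T"
  proof (rule inj_onI)
    fix x y assume xy: "x \<in> T" "y \<in> T" and "\<sigma> x = \<sigma> y"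
    have "T \<subseteq> cells n d"
      using ST(1,3) unfolding cells_def by auto
    then have "\<sigma> (\<sigma> x) = x" "\<sigma> (\<sigma> y) = y"
      using pm xy unfolding perfect_matchings_def by auto
    with \<open>\<sigma> x = \<sigma> y\<close> show "x = y"
      by metis
  qed
  then have "restrict \<sigma> T \<in> {f \<in> T \<rightarrow>\<^sub>E S \<times> {0..<d}. inj_on f T \<and> f ` T \<inter> T = {}}"
    using ST by auto
  then show "\<sigma> \<in> (\<Union>S\<in>{S. S \<subseteq> {0..<n} \<and> card S = s}. \<Union>T\<in>{T. T \<subseteq> S \<times> {0..<d} \<and> card T = m}.
       \<Union>f\<in>{f \<in> T \<rightarrow>\<^sub>E S \<times> {0..<d}. inj_on f T \<and> f ` T \<inter> T = {}}.
         {\<sigma>\<in>perfect_matchings n d. \<forall>t\<in>T. \<sigma> t = f t})"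
    using ST pm by (intro UN_I[of S] UN_I[of T] UN_I[of "restrict \<sigma> T"]) auto
qed

lemma card_UN_le_mult:
  assumes "finite A" "card A \<le> a" "\<And>x. x \<in> A \<Longrightarrow> card (B x) \<le> b"
  shows "card (\<Union>x\<in>A. B x) \<le> a * b"
proof -
  have "card (\<Union>x\<in>A. B x) \<le> (\<Sum>x\<in>A. card (B x))"
    by (rule card_UN_le[OF assms(1)])
  also have "\<dots> \<le> card A * b"
    using sum_bounded_above[of A "\<lambda>x. card (B x)" b] assms(3) by simp
  also have "\<dots> \<le> a * b"
    using assms(2) by simp
  finally show ?thesis .
qed

lemma card_PiE_subset_le:
  assumes "finite T" "finite Y"
  shows "card {f \<in> T \<rightarrow>\<^sub>E Y. P f} \<le> card Y ^ card T"
proof -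
  have "card {f \<in> T \<rightarrow>\<^sub>E Y. P f} \<le> card (T \<rightarrow>\<^sub>E Y)"
    using assms by (intro card_mono) (auto simp: finite_PiE)
  then show ?thesis
    using assms by (simp add: card_PiE)
qed

lemma card_extensions_le:
  assumes S: "S \<subseteq> {0..<n}" and T: "T \<subseteq> S \<times> {0..<d}"
  shows "card (\<Union>f\<in>{f \<in> T \<rightarrow>\<^sub>E S \<times> {0..<d}. inj_on f T \<and> f ` T \<inter> T = {}}.
                 {\<sigma>\<in>perfect_matchings n d. \<forall>t\<in>T. \<sigma> t = f t})
         \<le> (card S * d) ^ card T * pairings_count (n * d - 2 * card T)"
proof (rule card_UN_le_mult)
  have fin: "finite S" "finite T"
    using S T finite_subset[OF T] finite_subset[OF S] by auto
  then show "finite {f \<in> T \<rightarrow>\<^sub>E S \<times> {0..<d}. inj_on f T \<and> f ` T \<inter> T = {}}"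
    by (simp add: finite_PiE)
  show "card {f \<in> T \<rightarrow>\<^sub>E S \<times> {0..<d}. inj_on f T \<and> f ` T \<inter> T = {}} \<le> (card S * d) ^ card T"
    using card_PiE_subset_le[of T "S \<times> {0..<d}"] fin by (simp add: card_cartesian_product)
  show "card {\<sigma>\<in>perfect_matchings n d. \<forall>t\<in>T. \<sigma> t = f t} \<le> pairings_count (n * d - 2 * card T)"
    if "f \<in> {f \<in> T \<rightarrow>\<^sub>E S \<times> {0..<d}. inj_on f T \<and> f ` T \<inter> T = {}}" for f
  proof -
    have "f ` T \<subseteq> S \<times> {0..<d}" "inj_on f T" "f ` T \<inter> T = {}"
      using that by (blast dest: PiE_mem)+
    moreover have "S \<times> {0..<d} \<subseteq> cells n d"
      using S unfolding cells_def by auto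
    ultimately have "card {\<sigma>\<in>perfect_matchings n d. \<forall>t\<in>T. \<sigma> t = f t}
        = pairings_count (n * d - 2 * card T)"
      using T by (intro card_matchings_extending) auto
    then show ?thesis
      by simp
  qed
qed

lemma card_dense_event_le:
  "card (perfect_matchings n d \<inter> dense_event n d s m)
     \<le> (n choose s) * (((s * d) choose m) * ((s * d) ^ m * pairings_count (n * d - 2 * m)))"
proof -
  define SS where "SS = {S. S \<subseteq> {0..<n} \<and> card S = s}"
  define TT where "TT S = {T. T \<subseteq> S \<times> {0..<d} \<and> card T = m}" for S :: "nat set"
  define E where "E S T = (\<Union>f\<in>{f \<in> T \<rightarrow>\<^sub>E S \<times> {0..<d}. inj_on f T \<and> f ` T \<inter> T = {}}.
                            {\<sigma>\<in>perfect_matchings n d. \<forall>t\<in>T. \<sigma> t = f t})"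
    for S :: "nat set" and T :: "(nat \<times> nat) set"
  have SS: "finite S" "card S = s" "S \<subseteq> {0..<n}" if "S \<in> SS" for S
    using that finite_subset unfolding SS_def by auto
  have TT_bound: "card (\<Union>T\<in>TT S. E S T)
      \<le> ((s * d) choose m) * ((s * d) ^ m * pairings_count (n * d - 2 * m))" if "S \<in> SS" for S
  proof (rule card_UN_le_mult)
    show "finite (TT S)" "card (TT S) \<le> (s * d) choose m"
      using SS[OF that] n_subsets[of "S \<times> {0..<d}" m]
      unfolding TT_def by (auto simp: card_cartesian_product)
    show "card (E S T) \<le> (s * d) ^ m * pairings_count (n * d - 2 * m)" if "T \<in> TT S" for T
      using card_extensions_le[of S n T d] SS[OF \<open>S \<in> SS\<close>] that unfolding E_def TT_def by simp
  qed
  have "card (\<Union>S\<in>SS. \<Union>T\<in>TT S. E S T)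
      \<le> (n choose s) * (((s * d) choose m) * ((s * d) ^ m * pairings_count (n * d - 2 * m)))"
  proof (rule card_UN_le_mult)
    show "finite SS"
      unfolding SS_def by (rule finite_subset[of _ "Pow {0..<n}"]) auto
    show "card SS \<le> n choose s"
      unfolding SS_def using n_subsets[of "{0..<n}" s] by simp
  qed (rule TT_bound)
  moreover have "perfect_matchings n d \<inter> dense_event n d s m \<subseteq> (\<Union>S\<in>SS. \<Union>T\<in>TT S. E S T)"
    unfolding SS_def TT_def E_def by (rule dense_event_subset_extensions)
  moreover have "finite (\<Union>S\<in>SS. \<Union>T\<in>TT S. E S T)"
    by (rule finite_subset[OF _ finite_perfect_matchings]) (auto simp: E_def)
  ultimately show ?thesis
    by (meson card_mono order_trans)
qed

lemma prob_dense_event_le: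
  assumes ev: "even (n * d)" and m: "4 * m \<le> n * d"
  shows "measure_pmf.prob (pmf_of_set (perfect_matchings n d)) (dense_event n d s m)
     \<le> real (n choose s) * real ((s * d) choose m) * real (s * d) ^ m / real (n * d - 2 * m) ^ m"
proof -
  let ?PM = "perfect_matchings n d"
  define K where "K = (n choose s) * (((s * d) choose m) * (s * d) ^ m)"
  define p where "p = pairings_count (n * d - 2 * m)"
  have "0 < p"
    unfolding p_def using ev m by (intro pairings_count_pos) auto
  moreover have "0 < (n * d - 2 * m) ^ m"
    using m by (cases "m = 0") auto
  ultimately have pos: "0 < (n * d - 2 * m) ^ m * p"
    by simp
  have le: "(n * d - 2 * m) ^ m * p \<le> card ?PM"
    unfolding p_def card_perfect_matchings using m by (intro pairings_count_ge) simp
  then have "?PM \<noteq> {}"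
    using pos by auto
  then have "measure_pmf.prob (pmf_of_set ?PM) (dense_event n d s m)
      = card (?PM \<inter> dense_event n d s m) / card ?PM"
    by (rule measure_pmf_of_set[OF _ finite_perfect_matchings])
  also have "\<dots> \<le> real (K * p) / real ((n * d - 2 * m) ^ m * p)"
  proof (rule frac_le)
    have "card (?PM \<inter> dense_event n d s m) \<le> K * p"
      using card_dense_event_le[of n d s m] unfolding K_def p_def by (simp only: mult.assoc)
    then show "real (card (?PM \<inter> dense_event n d s m)) \<le> real (K * p)"
      by (simp only: of_nat_le_iff)
    show "0 < real ((n * d - 2 * m) ^ m * p)"
      using pos by (simp only: of_nat_0_less_iff)
    show "real ((n * d - 2 * m) ^ m * p) \<le> real (card ?PM)"
      using le by (simp only: of_nat_le_iff)
  qed simp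
  also have "\<dots> = real K / real (n * d - 2 * m) ^ m"
    using \<open>0 < p\<close> by simp
  finally show ?thesis
    unfolding K_def by (simp add: algebra_simps)
qed

section \<open>The first-moment estimate\<close>

lemma power_div_fact_le_exp:
  fixes x :: real
  assumes "0 \<le> x"
  shows "x ^ n / fact n \<le> exp x"
proof -
  have "(\<Sum>i\<in>{n}. x ^ i /\<^sub>R fact i) \<le> (\<Sum>i. x ^ i /\<^sub>R fact i)"
    by (rule sum_le_suminf[OF summable_exp_generic]) (use assms in auto)
  then show ?thesis
    by (simp add: exp_def divide_inverse_commute)
qed

lemma binomial_le_exp_pow:
  assumes "0 < s"
  shows "real (n choose s) \<le> (exp 1 * real n / real s) ^ s"
proof -
  have "real s ^ s \<le> exp (real s) * fact s"
    using power_div_fact_le_exp[of "real s" s] by (simp add: divide_le_eq)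
  also have "exp (real s) = exp 1 ^ s"
    using exp_of_nat_mult[of s 1] by simp
  finally have "real s ^ s \<le> exp 1 ^ s * fact s" .
  then have "real (n choose s) * real s ^ s \<le> real (n choose s) * (exp 1 ^ s * fact s)"
    by (rule mult_left_mono) simp
  also have "\<dots> = exp 1 ^ s * (real (n choose s) * fact s)"
    by simp
  also have "\<dots> \<le> exp 1 ^ s * real n ^ s"
  proof -
    have "real ((n choose s) * fact s) \<le> real (n ^ s)"
      using binomial_fact_pow[of n s] by (simp only: of_nat_le_iff)
    then show ?thesis
      by (intro mult_left_mono) simp_all
  qed
  finally have "real (n choose s) * real s ^ s \<le> exp 1 ^ s * real n ^ s" .
  moreover have "0 < real s ^ s"
    using assms by simp
  ultimately have "real (n choose s) \<le> exp 1 ^ s * real n ^ s / real s ^ s"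
    by (simp add: pos_le_divide_eq)
  also have "\<dots> = (exp 1 * real n / real s) ^ s"
    by (simp add: power_divide power_mult_distrib)
  finally show ?thesis .
qed

lemma free_cells_ratio_le:
  assumes m: "0 < m" and n: "0 < n" and md: "4 * m \<le> n * d"
  shows "real (s * d) / real (n * d - 2 * m) \<le> 2 * real s / real n"
proof -
  define N where "N = real n * real d"
  have X: "real (n * d - 2 * m) = N - 2 * real m"
    unfolding N_def using md by (simp add: of_nat_diff)
  have md': "4 * real m \<le> N"
    unfolding N_def using md by (simp flip: of_nat_mult of_nat_le_iff)
  have "0 < real m"
    using m by simp
  then have X0: "0 < real (n * d - 2 * m)"
    unfolding X using md' by linarith
  have "N \<le> 2 * real (n * d - 2 * m)"
    unfolding X right_diff_distrib using md' by linarith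
  then have "real s * N \<le> real s * (2 * real (n * d - 2 * m))"
    by (rule mult_left_mono) simp
  then have "real (s * d) * real n \<le> 2 * real s * real (n * d - 2 * m)"
    unfolding N_def by (simp add: algebra_simps)
  moreover have "0 < real n"
    using n by simp
  ultimately have "real (s * d) \<le> 2 * real s * real (n * d - 2 * m) / real n"
    by (simp only: pos_le_divide_eq)
  then show ?thesis
    by (simp only: pos_divide_le_eq[OF X0] times_divide_eq_left)
qed

lemma first_moment_le:
  assumes s: "0 < s" and m: "0 < m" and n: "0 < n" and md: "4 * m \<le> n * d"
  shows "real (n choose s) * real ((s * d) choose m) * real (s * d) ^ m / real (n * d - 2 * m) ^ m
         \<le> (exp 1 * real n / real s) ^ s * (2 * exp 1 * real d * real s ^ 2 / (real m * real n)) ^ m"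
proof -
  have "real (s * d) / real (n * d - 2 * m) \<le> 2 * real s / real n"
    by (rule free_cells_ratio_le[OF m n md])
  then have ratio: "real (s * d) ^ m / real (n * d - 2 * m) ^ m \<le> (2 * real s / real n) ^ m"
    by (metis power_divide power_mono divide_nonneg_nonneg of_nat_0_le_iff)
  have "real (n choose s) * real ((s * d) choose m) * real (s * d) ^ m / real (n * d - 2 * m) ^ m
      = real (n choose s) * real ((s * d) choose m) * (real (s * d) ^ m / real (n * d - 2 * m) ^ m)"
    by simp
  also have "\<dots> \<le> (exp 1 * real n / real s) ^ s * (exp 1 * real (s * d) / real m) ^ m
                  * (2 * real s / real n) ^ m"
    using binomial_le_exp_pow[OF s, of n] binomial_le_exp_pow[OF m, of "s * d"] ratio
    by (intro mult_mono) auto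
  also have "\<dots> = (exp 1 * real n / real s) ^ s * (2 * exp 1 * real d * real s ^ 2 / (real m * real n)) ^ m"
    by (simp add: mult.assoc flip: power_mult_distrib) (simp add: power2_eq_square field_simps)
  finally show ?thesis .
qed

definition first_moment_constant :: "nat \<Rightarrow> real" where
  "first_moment_constant L = exp 1 ^ L * (2 * exp 1) ^ (2 * L - 2) * (2 * L) ^ (L - 2)"

lemma first_moment_base_le:
  fixes e x y D :: real and L d :: nat
  assumes L: "3 \<le> L" and d: "1 \<le> d" and D: "0 < D" and e: "0 < e"
    and x: "0 < x" "x \<le> 2 * real L / D" and y: "0 < y" "y \<le> 1"
    and Dd: "real d ^ (2 * L - 1) \<le> D ^ (L - 2)"
    and CL: "e ^ L * (2 * e) ^ (2 * L - 2) * (2 * L) ^ (L - 2) \<le> real d / 2"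
  shows "(e / x) ^ L * (2 * e * real d * x * y) ^ (2 * L - 2) \<le> 1 / 2"
proof -
  define M where "M = 2 * L - 2"
  have M: "M = L + (L - 2)" "2 * L - 1 = Suc M"
    using L unfolding M_def by auto
  have "(e / x) ^ L * (2 * e * real d * x * y) ^ M = e ^ L * (2 * e * real d * y) ^ M * x ^ (L - 2)"
    using x by (simp add: M(1) power_add power_mult_distrib field_simps)
  also have "\<dots> \<le> e ^ L * (2 * e * real d) ^ M * x ^ (L - 2)"
    using y e x d by (intro mult_right_mono mult_left_mono power_mono) auto
  also have "\<dots> \<le> e ^ L * (2 * e * real d) ^ M * ((2 * L) ^ (L - 2) / real d ^ (2 * L - 1))"
  proof -
    have "x ^ (L - 2) \<le> (2 * real L / D) ^ (L - 2)"
      using x by (intro power_mono) auto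
    also have "\<dots> \<le> (2 * L) ^ (L - 2) / real d ^ (2 * L - 1)"
      using Dd d D by (simp add: power_divide divide_left_mono)
    finally show ?thesis
      using e d by (intro mult_left_mono) auto
  qed
  also have "\<dots> = e ^ L * (2 * e) ^ M * (2 * L) ^ (L - 2) / real d"
  proof -
    have "real d ^ (2 * L - 1) = real d * real d ^ M"
      by (simp only: M(2) power_Suc)
    then show ?thesis
      using d by (simp add: power_mult_distrib field_simps)
  qed
  also have "\<dots> \<le> 1 / 2"
    using CL d unfolding M_def by (simp add: divide_le_eq)
  finally show ?thesis
    unfolding M_def .
qed

lemma first_moment_le_half_pow:
  fixes L k n d :: nat and D :: real
  assumes L: "3 \<le> L" and k: "0 < k" and n: "0 < n" and d: "1 \<le> d" and D: "0 < D"
    and density: "real (L * k) / real n \<le> 2 * real L / D" and Dd: "real d ^ (2 * L - 1) \<le> D ^ (L - 2)"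
    and CL: "first_moment_constant L \<le> real d / 2"
  shows "(exp 1 * real n / real (L * k)) ^ (L * k)
         * (2 * exp 1 * real d * real (L * k) ^ 2 / (real ((2 * L - 2) * k) * real n)) ^ ((2 * L - 2) * k)
         \<le> (1 / 2) ^ k"
proof -
  define e where "e = exp (1::real)"
  define M where "M = 2 * L - 2"
  define x where "x = real (L * k) / real n"
  define y where "y = real L / real M"
  have e0: "0 < e" and x0: "0 < x" and y0: "0 < y" and "0 < real M"
    using L k n unfolding e_def x_def y_def M_def by auto
  have base: "(e / x) ^ L * (2 * e * real d * x * y) ^ M \<le> 1 / 2"
    unfolding M_def
    by (rule first_moment_base_le[OF L d D e0 x0 _ y0])
      (use L density Dd CL in \<open>auto simp: x_def y_def M_def e_def first_moment_constant_def\<close>)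
  have eq1: "exp 1 * real n / real (L * k) = e / x"
    unfolding e_def x_def by simp
  have eq2: "2 * exp 1 * real d * real (L * k) ^ 2 / (real ((2 * L - 2) * k) * real n)
      = 2 * e * real d * x * y"
    using k n \<open>0 < real M\<close> unfolding e_def x_def y_def M_def by (simp add: power2_eq_square field_simps)
  have "(exp 1 * real n / real (L * k)) ^ (L * k)
         * (2 * exp 1 * real d * real (L * k) ^ 2 / (real ((2 * L - 2) * k) * real n)) ^ ((2 * L - 2) * k)
      = (e / x) ^ (L * k) * (2 * e * real d * x * y) ^ (M * k)"
    unfolding eq1 eq2 M_def ..
  also have "\<dots> = ((e / x) ^ L * (2 * e * real d * x * y) ^ M) ^ k"
    by (simp add: power_mult power_mult_distrib)
  also have "\<dots> \<le> (1 / 2) ^ k"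
    using e0 x0 y0 d base by (intro power_mono) auto
  finally show ?thesis .
qed

section \<open>Small contagious sets are unlikely\<close>

lemma prob_pmf_of_set_mono:
  assumes "finite S" "S \<noteq> {}" "S \<inter> A \<subseteq> B"
  shows "measure_pmf.prob (pmf_of_set S) A \<le> measure_pmf.prob (pmf_of_set S) B"
proof -
  have "card (S \<inter> A) \<le> card (S \<inter> B)"
    using assms by (intro card_mono) auto
  then show ?thesis
    using assms by (simp add: measure_pmf_of_set divide_right_mono)
qed

lemma density_bounds:
  fixes D :: real
  assumes LD: "16 * real L \<le> D" and D: "0 < D" and n: "0 < n" and k: "real k \<le> 2 * real n / D"
  shows "real (L * k) \<le> real n / 8" "real (L * k) / real n \<le> 2 * real L / D"
proof -
  have s_le: "real (L * k) \<le> real L * (2 * real n / D)"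
    using mult_left_mono[OF k, of "real L"] by simp
  also have "\<dots> = (16 * real L) * real n / (8 * D)"
    by (simp add: field_simps)
  also have "\<dots> \<le> D * real n / (8 * D)"
    using LD D by (intro divide_right_mono mult_right_mono) auto
  also have "\<dots> = real n / 8"
    using D by simp
  finally show "real (L * k) \<le> real n / 8" .
  show "real (L * k) / real n \<le> 2 * real L / D"
    using s_le n D by (simp add: field_simps)
qed

lemma prob_min_contagious_lt_le:
  fixes L k n d :: nat and D :: real
  assumes L: "3 \<le> L" and d: "1 \<le> d" and LD: "16 * real L \<le> D"
    and Dd: "real d ^ (2 * L - 1) \<le> D ^ (L - 2)" and CL: "first_moment_constant L \<le> real d / 2"
    and k: "1 \<le> k" "real n / D \<le> real k" "real k \<le> 2 * real n / D" and ev: "even (n * d)"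
  shows "measure_pmf.prob (pmf_of_set (perfect_matchings n d))
           {\<sigma>. real (min_contagious {0..<n} (cm_nbhd d \<sigma>) 2) < real n / D} \<le> (1 / 2) ^ k"
proof -
  define s where "s = L * k"
  define m where "m = (2 * L - 2) * k"
  have D: "0 < D"
    using LD L by linarith
  have n: "0 < n"
    using k D by (cases "n = 0") auto
  have s_bounds: "real s \<le> real n / 8" "real s / real n \<le> 2 * real L / D"
    unfolding s_def by (rule density_bounds[OF LD D n k(3)])+
  moreover have "m \<le> 2 * s"
    unfolding m_def s_def by simp
  ultimately have sn: "s \<le> n" and "4 * m \<le> n * d"
    using d by (simp_all flip: of_nat_le_iff) (use mult_le_mono[of "4 * m" n 1 d] in linarith)
  let ?PM = "perfect_matchings n d"
  have "?PM \<inter> {\<sigma>. real (min_contagious {0..<n} (cm_nbhd d \<sigma>) 2) < real n / D} \<subseteq> dense_event n d s m"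
    using k(2) sn L unfolding s_def m_def by (auto intro!: min_contagious_le_imp_dense_event)
  then have "measure_pmf.prob (pmf_of_set ?PM)
      {\<sigma>. real (min_contagious {0..<n} (cm_nbhd d \<sigma>) 2) < real n / D}
      \<le> measure_pmf.prob (pmf_of_set ?PM) (dense_event n d s m)"
    using pairings_count_pos[OF ev] card_perfect_matchings[of n d]
    by (intro prob_pmf_of_set_mono finite_perfect_matchings) auto
  also have "\<dots> \<le> real (n choose s) * real ((s * d) choose m) * real (s * d) ^ m / real (n * d - 2 * m) ^ m"
    by (rule prob_dense_event_le[OF ev \<open>4 * m \<le> n * d\<close>])
  also have "\<dots> \<le> (exp 1 * real n / real s) ^ s * (2 * exp 1 * real d * real s ^ 2 / (real m * real n)) ^ m"
    using L k n \<open>4 * m \<le> n * d\<close> unfolding s_def m_def by (intro first_moment_le) auto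
  also have "\<dots> \<le> (1 / 2) ^ k"
    using L k n d D s_bounds(2) Dd CL unfolding s_def m_def by (intro first_moment_le_half_pow) auto
  finally show ?thesis .
qed

lemma power_le_powr_power:
  fixes x b :: real
  assumes "1 \<le> x" "real a \<le> b * real c"
  shows "x ^ a \<le> (x powr b) ^ c"
proof -
  have "x ^ a = x powr real a"
    using assms(1) by (simp add: powr_realpow)
  also have "\<dots> \<le> x powr (b * real c)"
    using assms by (intro powr_mono) auto
  also have "\<dots> = (x powr b) ^ c"
    using assms(1) by (simp add: powr_powr flip: powr_realpow)
  finally show ?thesis .
qed

lemma min_contagious_large_whp:
  fixes L d :: nat and D :: real
  assumes L: "3 \<le> L" and d: "1 \<le> d" and LD: "16 * real L \<le> D"
    and Dd: "real d ^ (2 * L - 1) \<le> D ^ (L - 2)"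
    and CL: "first_moment_constant L \<le> real d / 2"
  shows "\<forall>\<delta>>0. \<exists>N::nat. \<forall>n\<ge>N. even (n * d) \<longrightarrow>
           measure_pmf.prob (pmf_of_set (perfect_matchings n d))
             {\<sigma>. real (min_contagious {0..<n} (cm_nbhd d \<sigma>) 2) \<ge> real n / D} \<ge> 1 - \<delta>"
proof (intro allI impI)
  fix \<delta> :: real
  assume "0 < \<delta>"
  then obtain K :: nat where K: "(1 / 2 :: real) ^ K < \<delta>"
    using real_arch_pow_inv[of \<delta> "1 / 2"] by auto
  have D: "0 < D"
    using LD L by linarith
  show "\<exists>N::nat. \<forall>n\<ge>N. even (n * d) \<longrightarrow>
          measure_pmf.prob (pmf_of_set (perfect_matchings n d))
            {\<sigma>. real (min_contagious {0..<n} (cm_nbhd d \<sigma>) 2) \<ge> real n / D} \<ge> 1 - \<delta>"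
  proof (intro exI[of _ "nat \<lceil>D * (real K + 1)\<rceil>"] allI impI)
    fix n :: nat
    assume "nat \<lceil>D * (real K + 1)\<rceil> \<le> n" and ev: "even (n * d)"
    then have "D * (real K + 1) \<le> real n"
      by linarith
    then have Kn: "real K + 1 \<le> real n / D"
      using D by (simp add: field_simps)
    define k where "k = nat \<lceil>real n / D\<rceil>"
    have k: "real n / D \<le> real k" "real k \<le> real n / D + 1"
      unfolding k_def using Kn by linarith+
    let ?small = "{\<sigma>. real (min_contagious {0..<n} (cm_nbhd d \<sigma>) 2) < real n / D}"
    have "measure_pmf.prob (pmf_of_set (perfect_matchings n d)) ?small \<le> (1 / 2) ^ k"
      using k Kn by (intro prob_min_contagious_lt_le[OF L d LD Dd CL _ _ _ ev]) auto
    also have "\<dots> \<le> (1 / 2) ^ K"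
      using k Kn by (intro power_decreasing) auto
    finally have "measure_pmf.prob (pmf_of_set (perfect_matchings n d)) ?small < \<delta>"
      using K by linarith
    moreover have "{\<sigma>. real (min_contagious {0..<n} (cm_nbhd d \<sigma>) 2) \<ge> real n / D} = UNIV - ?small"
      by auto
    ultimately show "measure_pmf.prob (pmf_of_set (perfect_matchings n d))
        {\<sigma>. real (min_contagious {0..<n} (cm_nbhd d \<sigma>) 2) \<ge> real n / D} \<ge> 1 - \<delta>"
      using measure_pmf.prob_compl[of ?small "pmf_of_set (perfect_matchings n d)"] by simp
  qed
qed

lemma exponent_comparison:
  fixes \<epsilon> :: real
  assumes "0 < \<epsilon>" "3 \<le> L" "3 / \<epsilon> \<le> real L - 2"
  shows "real (2 * L - 1) \<le> (2 + \<epsilon>) * real (L - 2)"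
proof -
  have "3 \<le> (real L - 2) * \<epsilon>"
    using assms(3) by (simp only: pos_divide_le_eq[OF assms(1)])
  moreover have "(2 + \<epsilon>) * (real L - 2) = 2 * real L - 4 + (real L - 2) * \<epsilon>"
    by (simp add: algebra_simps)
  moreover have "real (L - 2) = real L - 2" "real (2 * L - 1) = 2 * real L - 1"
    using assms(2) by auto
  ultimately show ?thesis
    by simp
qed

theorem theorem8:
  fixes \<epsilon> :: real
  assumes "\<epsilon> > 0"
  shows "\<exists>d0::nat. \<forall>d::nat. d > d0 \<longrightarrow>
           (\<forall>\<delta>>0. \<exists>N::nat. \<forall>n\<ge>N. even (n * d) \<longrightarrow>
              measure_pmf.prob (pmf_of_set (perfect_matchings n d))
                {\<sigma>. real (min_contagious {0..<n} (cm_nbhd d \<sigma>) 2)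
                       \<ge> real n / real d powr (2 + \<epsilon>)} \<ge> 1 - \<delta>)"
proof -
  define L :: nat where "L = nat \<lceil>3 / \<epsilon>\<rceil> + 3"
  have L: "3 \<le> L"
    unfolding L_def by simp
  have "3 / \<epsilon> \<le> real L - 2"
    unfolding L_def using real_nat_ceiling_ge[of "3 / \<epsilon>"] by simp
  then have "real (2 * L - 1) \<le> (2 + \<epsilon>) * real (L - 2)"
    by (rule exponent_comparison[OF assms L])
  show ?thesis
  proof (rule exI[of _ "nat \<lceil>2 * first_moment_constant L\<rceil> + 16 * L"], rule allI, rule impI)
    fix d :: nat
    assume d0: "nat \<lceil>2 * first_moment_constant L\<rceil> + 16 * L < d"
    then have d: "1 \<le> d" "first_moment_constant L \<le> real d / 2" "16 * real L \<le> real d"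
      by linarith+
    have "real d = real d powr 1"
      using d by simp
    also have "\<dots> \<le> real d powr (2 + \<epsilon>)"
      using d assms by (intro powr_mono) auto
    finally have "real d \<le> real d powr (2 + \<epsilon>)" .
    then show "\<forall>\<delta>>0. \<exists>N::nat. \<forall>n\<ge>N. even (n * d) \<longrightarrow>
        measure_pmf.prob (pmf_of_set (perfect_matchings n d))
          {\<sigma>. real (min_contagious {0..<n} (cm_nbhd d \<sigma>) 2) \<ge> real n / real d powr (2 + \<epsilon>)} \<ge> 1 - \<delta>"
      using d \<open>real (2 * L - 1) \<le> (2 + \<epsilon>) * real (L - 2)\<close>
      by (intro min_contagious_large_whp[OF L] power_le_powr_power) auto
  qed
qed

end
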